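(* Let $G\in\mathcal{C}$, let $C$ be a proper separator of $G$ with full components $L$ and $R$, let $c_1,c_2\in C$, and let $H$ be a $(C,c_1,c_2)$-hole, with $H_L,H_R,\ell_1,\ell_2,r_1,r_2$ as defined below. Suppose $v\in V(G)\setminus V(H)$ has a neighbor in $H_L^*\setminus\{\ell_1,\ell_2\}$ and a neighbor in $H_R^*\setminus\{r_1,r_2\}$. Then $v$ is $(c_1,c_2)$-heavy with respect to $H$.
   Context: All graphs are finite and simple; paths are induced paths; a hole is an induced cycle of length at least four. $\mathcal{C}$ is the class of graphs containing no theta, pyramid, prism or turtle as an induced subgraph (theta: two nonadjacent vertices joined by three otherwise disjoint paths, any two inducing a hole; pyramid: a vertex $a$ joined to the three vertices $b_i$ of a triangle by paths disjoint except at $a$, any two inducing a hole; prism: two disjoint triangles $\{a_i\},\{b_i\}$ joined by disjoint paths $a_i$–$b_i$, any two inducing a hole; turtle: a hole formed by disjoint paths $P_1$ from $a_1$ to $b_1$ and $P_2$ from $a_2$ to $b_2$ with edges $a_1a_2,b_1b_2$, plus adjacent vertices $x,y$, $x$ having $\ge3$ neighbors in $P_1$ and none in $P_2$, $y$ having $\ge3$ neighbors in $P_2$ and none in $P_1$). A minimal separator $C$ of $G$ is a set such that $G\setminus C$ has two distinct components $L,R$ with $N(L)=N(R)=C$; it is proper if it is not a clique, in which case $G\setminus C$ has exactly two components $L,R$ with $N(L)=N(R)=C$ (the full components). For $c_1,c_2\in C$, a $(C,c_1,c_2)$-hole is a hole $H$ with $V(H)\cap C=\{c_1,c_2\}$ whose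 two $c_1$–$c_2$ paths $H_L,H_R$ satisfy $H_L^*\subseteq L$ and $H_R^*\subseteq R$, where $P^*$ denotes the interior (vertices other than the ends) of a path $P$. $\ell_1,\ell_2$ are the neighbors of $c_1,c_2$ in $H_L$, and $r_1,r_2$ are the neighbors of $c_1,c_2$ in $H_R$. For $u\notin V(H)$, $N_H(u)$ is the set of its neighbors in $H$; $u$ is major for $H$ if $N_H(u)\ne\emptyset$ and $N_H(u)$ is not contained in the vertex set of any three-vertex subpath of $H$. A $w$-sector is a subpath $Q=x\text{-}\cdots\text{-}y$ of $H$ with $x,y$ neighbors of $w$ and no interior vertex adjacent to $w$; an extended neighborhood of $w$ in $H$ is $Q\cup(\{x',y'\}\cap N_H(w))$ for a $w$-sector $Q=x\text{-}\cdots\text{-}y$, where $x',y'$ are the neighbors of $x,y$ in $H\setminus V(Q)$; $a,b\in V(H)$ are distant in $H$ with respect to $w$ if no extended neighborhood of $w$ contains both. A vertex $v$ is $(c_1,c_2)$-heavy with respect to $H$ if $v$ is major for $H$ and $c_1,c_2$ are distant in $H$ with respect to $v$. *)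

theory Defs
  imports Main
begin

definition graph :: "'a set \<Rightarrow> ('a \<Rightarrow> 'a \<Rightarrow> bool) \<Rightarrow> bool" where
  "graph V E \<longleftrightarrow> finite V \<and> (\<forall>u v. E u v \<longrightarrow> E v u) \<and> (\<forall>u. \<not> E u u)
     \<and> (\<forall>u v. E u v \<longrightarrow> u \<in> V \<and> v \<in> V)"

definition is_path :: "'a set \<Rightarrow> ('a \<Rightarrow> 'a \<Rightarrow> bool) \<Rightarrow> 'a list \<Rightarrow> bool" where
  "is_path V E P \<longleftrightarrow> P \<noteq> [] \<and> distinct P \<and> set P \<subseteq> V \<and>
     (\<forall>i < length P. \<forall>j < length P. E (P ! i) (P ! j) \<longleftrightarrow> (i = Suc j \<or> j = Suc i))"

definition path_from_to :: "'a set \<Rightarrow> ('a \<Rightarrow> 'a \<Rightarrow> bool) \<Rightarrow> 'a list \<Rightarrow> 'a \<Rightarrow> 'a \<Rightarrow> bool" where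
  "path_from_to V E P a b \<longleftrightarrow> is_path V E P \<and> hd P = a \<and> last P = b"

definition is_hole :: "'a set \<Rightarrow> ('a \<Rightarrow> 'a \<Rightarrow> bool) \<Rightarrow> 'a list \<Rightarrow> bool" where
  "is_hole V E H \<longleftrightarrow> distinct H \<and> length H \<ge> 4 \<and> set H \<subseteq> V \<and>
     (\<forall>i < length H. \<forall>j < length H.
        E (H ! i) (H ! j) \<longleftrightarrow> (Suc i mod length H = j \<or> Suc j mod length H = i))"

definition induces_hole :: "'a set \<Rightarrow> ('a \<Rightarrow> 'a \<Rightarrow> bool) \<Rightarrow> 'a set \<Rightarrow> bool" where
  "induces_hole V E S \<longleftrightarrow> (\<exists>H. is_hole V E H \<and> set H = S)"

definition has_theta :: "'a set \<Rightarrow> ('a \<Rightarrow> 'a \<Rightarrow> bool) \<Rightarrow> bool" where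
  "has_theta V E \<longleftrightarrow> (\<exists>a b P1 P2 P3. a \<noteq> b \<and> \<not> E a b \<and>
     path_from_to V E P1 a b \<and> path_from_to V E P2 a b \<and> path_from_to V E P3 a b \<and>
     set P1 \<inter> set P2 = {a, b} \<and> set P1 \<inter> set P3 = {a, b} \<and> set P2 \<inter> set P3 = {a, b} \<and>
     induces_hole V E (set P1 \<union> set P2) \<and> induces_hole V E (set P1 \<union> set P3) \<and>
     induces_hole V E (set P2 \<union> set P3))"

definition has_pyramid :: "'a set \<Rightarrow> ('a \<Rightarrow> 'a \<Rightarrow> bool) \<Rightarrow> bool" where
  "has_pyramid V E \<longleftrightarrow> (\<exists>a b1 b2 b3 P1 P2 P3. distinct [a, b1, b2, b3] \<and>
     E b1 b2 \<and> E b1 b3 \<and> E b2 b3 \<and>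
     path_from_to V E P1 a b1 \<and> path_from_to V E P2 a b2 \<and> path_from_to V E P3 a b3 \<and>
     set P1 \<inter> set P2 = {a} \<and> set P1 \<inter> set P3 = {a} \<and> set P2 \<inter> set P3 = {a} \<and>
     induces_hole V E (set P1 \<union> set P2) \<and> induces_hole V E (set P1 \<union> set P3) \<and>
     induces_hole V E (set P2 \<union> set P3))"

definition has_prism :: "'a set \<Rightarrow> ('a \<Rightarrow> 'a \<Rightarrow> bool) \<Rightarrow> bool" where
  "has_prism V E \<longleftrightarrow> (\<exists>a1 a2 a3 b1 b2 b3 P1 P2 P3. distinct [a1, a2, a3, b1, b2, b3] \<and>
     E a1 a2 \<and> E a1 a3 \<and> E a2 a3 \<and> E b1 b2 \<and> E b1 b3 \<and> E b2 b3 \<and>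
     path_from_to V E P1 a1 b1 \<and> path_from_to V E P2 a2 b2 \<and> path_from_to V E P3 a3 b3 \<and>
     set P1 \<inter> set P2 = {} \<and> set P1 \<inter> set P3 = {} \<and> set P2 \<inter> set P3 = {} \<and>
     induces_hole V E (set P1 \<union> set P2) \<and> induces_hole V E (set P1 \<union> set P3) \<and>
     induces_hole V E (set P2 \<union> set P3))"

definition has_turtle :: "'a set \<Rightarrow> ('a \<Rightarrow> 'a \<Rightarrow> bool) \<Rightarrow> bool" where
  "has_turtle V E \<longleftrightarrow> (\<exists>a1 b1 a2 b2 P1 P2 x y.
     path_from_to V E P1 a1 b1 \<and> path_from_to V E P2 a2 b2 \<and> set P1 \<inter> set P2 = {} \<and>
     E a1 a2 \<and> E b1 b2 \<and> induces_hole V E (set P1 \<union> set P2) \<and>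
     x \<in> V \<and> y \<in> V \<and> x \<notin> set P1 \<union> set P2 \<and> y \<notin> set P1 \<union> set P2 \<and> E x y \<and>
     card {u \<in> set P1. E x u} \<ge> 3 \<and> (\<forall>u \<in> set P2. \<not> E x u) \<and>
     card {u \<in> set P2. E y u} \<ge> 3 \<and> (\<forall>u \<in> set P1. \<not> E y u))"

definition in_class_C :: "'a set \<Rightarrow> ('a \<Rightarrow> 'a \<Rightarrow> bool) \<Rightarrow> bool" where
  "in_class_C V E \<longleftrightarrow> graph V E \<and> \<not> has_theta V E \<and> \<not> has_pyramid V E \<and>
     \<not> has_prism V E \<and> \<not> has_turtle V E"

definition connected_set :: "('a \<Rightarrow> 'a \<Rightarrow> bool) \<Rightarrow> 'a set \<Rightarrow> bool" where
  "connected_set E S \<longleftrightarrow>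
     (\<forall>u \<in> S. \<forall>v \<in> S. (u, v) \<in> {(x, y). x \<in> S \<and> y \<in> S \<and> E x y}\<^sup>*)"

definition component_of :: "('a \<Rightarrow> 'a \<Rightarrow> bool) \<Rightarrow> 'a set \<Rightarrow> 'a set \<Rightarrow> bool" where
  "component_of E W S \<longleftrightarrow> S \<noteq> {} \<and> S \<subseteq> W \<and> connected_set E S \<and>
     (\<forall>u \<in> S. \<forall>w \<in> W - S. \<not> E u w)"

definition nbhd_set :: "'a set \<Rightarrow> ('a \<Rightarrow> 'a \<Rightarrow> bool) \<Rightarrow> 'a set \<Rightarrow> 'a set" where
  "nbhd_set V E S = {v \<in> V - S. \<exists>u \<in> S. E u v}"

definition is_clique :: "('a \<Rightarrow> 'a \<Rightarrow> bool) \<Rightarrow> 'a set \<Rightarrow> bool" where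
  "is_clique E C \<longleftrightarrow> (\<forall>u \<in> C. \<forall>v \<in> C. u \<noteq> v \<longrightarrow> E u v)"

text \<open>C is a proper (minimal) separator with L and R distinct full components of G minus C.\<close>
definition proper_separator :: "'a set \<Rightarrow> ('a \<Rightarrow> 'a \<Rightarrow> bool) \<Rightarrow> 'a set \<Rightarrow> 'a set \<Rightarrow> 'a set \<Rightarrow> bool" where
  "proper_separator V E C L R \<longleftrightarrow> C \<subseteq> V \<and>
     component_of E (V - C) L \<and> component_of E (V - C) R \<and> L \<noteq> R \<and>
     nbhd_set V E L = C \<and> nbhd_set V E R = C \<and> \<not> is_clique E C"

definition sep_hole :: "'a set \<Rightarrow> ('a \<Rightarrow> 'a \<Rightarrow> bool) \<Rightarrow> 'a set \<Rightarrow> 'a set \<Rightarrow> 'a set \<Rightarrow>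
     'a \<Rightarrow> 'a \<Rightarrow> 'a list \<Rightarrow> 'a list \<Rightarrow> 'a list \<Rightarrow> bool" where
  "sep_hole V E C L R c1 c2 H HL HR \<longleftrightarrow> is_hole V E H \<and> c1 \<noteq> c2 \<and>
     set H \<inter> C = {c1, c2} \<and>
     path_from_to V E HL c1 c2 \<and> path_from_to V E HR c1 c2 \<and>
     set HL \<union> set HR = set H \<and> set HL \<inter> set HR = {c1, c2} \<and>
     set HL - {c1, c2} \<subseteq> L \<and> set HR - {c1, c2} \<subseteq> R"

text \<open>Notions relative to a hole H (its vertex set; H is induced, so its edges are those of G).\<close>
definition nbrs_in :: "('a \<Rightarrow> 'a \<Rightarrow> bool) \<Rightarrow> 'a list \<Rightarrow> 'a \<Rightarrow> 'a set" where
  "nbrs_in E H u = {h \<in> set H. E u h}"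

definition is_major :: "'a set \<Rightarrow> ('a \<Rightarrow> 'a \<Rightarrow> bool) \<Rightarrow> 'a list \<Rightarrow> 'a \<Rightarrow> bool" where
  "is_major V E H u \<longleftrightarrow> nbrs_in E H u \<noteq> {} \<and>
     \<not> (\<exists>a b c. is_path V E [a, b, c] \<and> set [a, b, c] \<subseteq> set H \<and>
            nbrs_in E H u \<subseteq> {a, b, c})"

definition is_sector :: "'a set \<Rightarrow> ('a \<Rightarrow> 'a \<Rightarrow> bool) \<Rightarrow> 'a list \<Rightarrow> 'a \<Rightarrow> 'a list \<Rightarrow> bool" where
  "is_sector V E H w Q \<longleftrightarrow> is_path V E Q \<and> set Q \<subseteq> set H \<and> hd Q \<noteq> last Q \<and>
     E w (hd Q) \<and> E w (last Q) \<and> (\<forall>q \<in> set Q - {hd Q, last Q}. \<not> E w q)"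

definition ext_nbhd :: "('a \<Rightarrow> 'a \<Rightarrow> bool) \<Rightarrow> 'a list \<Rightarrow> 'a \<Rightarrow> 'a list \<Rightarrow> 'a set" where
  "ext_nbhd E H w Q = set Q \<union>
     {u \<in> set H - set Q. (E u (hd Q) \<or> E u (last Q)) \<and> E w u}"

definition distant :: "'a set \<Rightarrow> ('a \<Rightarrow> 'a \<Rightarrow> bool) \<Rightarrow> 'a list \<Rightarrow> 'a \<Rightarrow> 'a \<Rightarrow> 'a \<Rightarrow> bool" where
  "distant V E H w a b \<longleftrightarrow> a \<in> set H \<and> b \<in> set H \<and>
     \<not> (\<exists>Q. is_sector V E H w Q \<and> a \<in> ext_nbhd E H w Q \<and> b \<in> ext_nbhd E H w Q)"

definition heavy :: "'a set \<Rightarrow> ('a \<Rightarrow> 'a \<Rightarrow> bool) \<Rightarrow> 'a list \<Rightarrow> 'a \<Rightarrow> 'a \<Rightarrow> 'a \<Rightarrow> bool" where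
  "heavy V E H c1 c2 v \<longleftrightarrow> is_major V E H v \<and> distant V E H v c1 c2"

end

theory Submission
  imports Defs
begin

text \<open>The neighbours a and b of v lie in the two full components L and R and are not adjacent
  to c1 or c2, so they have no common neighbour in H: v is major. If some v-sector Q had both
  c1 and c2 in its extended neighbourhood, the part of Q strictly between them would be a
  connected subset of H - {c1, c2} joining a neighbour of c1 to one of c2 in which every
  neighbour of v is a neighbour of c1 or c2. Lying in one component, say L, it must contain
  all of the interior of HL, hence a, which is adjacent to v but to neither c1 nor c2.\<close>

lemma is_path_adj:
  assumes "is_path V E P" "i < length P" "j < length P"
  shows "E (P ! i) (P ! j) \<longleftrightarrow> i = Suc j \<or> j = Suc i"
  using assms unfolding is_path_def by blast

lemma is_path_hd_nbr:
  assumes P: "is_path V E P" and x: "x \<in> set P" "E (hd P) x"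
  shows "x = P ! 1"
proof -
  obtain k where k: "k < length P" "x = P ! k" using x(1) by (auto simp: in_set_conv_nth)
  then have "P \<noteq> []" by auto
  then have "E (P ! 0) (P ! k)" using x(2) k(2) by (simp add: hd_conv_nth)
  then have "k = 1" using is_path_adj[OF P, of 0 k] k(1) \<open>P \<noteq> []\<close> by simp
  with k show ?thesis by simp
qed

lemma is_path_last_nbr:
  assumes P: "is_path V E P" and x: "x \<in> set P" "E (last P) x"
  shows "x = P ! (length P - 2)"
proof -
  obtain k where k: "k < length P" "x = P ! k" using x(1) by (auto simp: in_set_conv_nth)
  then have "P \<noteq> []" by auto
  then have "E (P ! (length P - 1)) (P ! k)" using x(2) k(2) by (simp add: last_conv_nth)
  then have "length P - 1 = Suc k" using is_path_adj[OF P, of "length P - 1" k] k(1) \<open>P \<noteq> []\<close> by simp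
  then have "k = length P - 2" by linarith
  with k show ?thesis by simp
qed

lemma connected_set_path_segment:
  assumes P: "is_path V E P" and j: "j < length P"
  shows "connected_set E ((!) P ` {i..j})"
proof -
  let ?S = "(!) P ` {i..j}"
  let ?r = "{(x, y). x \<in> ?S \<and> y \<in> ?S \<and> E x y}"
  have link: "(P ! l, P ! Suc l) \<in> ?r" "(P ! Suc l, P ! l) \<in> ?r" if "i \<le> l" "l < j" for l
    using that j is_path_adj[OF P, of l "Suc l"] is_path_adj[OF P, of "Suc l" l] by auto
  have reach: "k \<le> l \<longrightarrow> l \<le> j \<longrightarrow> (P ! k, P ! l) \<in> ?r\<^sup>* \<and> (P ! l, P ! k) \<in> ?r\<^sup>*"
    if "i \<le> k" for k l
  proof (induction l)
    case (Suc l)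
    show ?case
    proof (cases "k = Suc l")
      case False
      show ?thesis
      proof (intro impI)
        assume "k \<le> Suc l" "Suc l \<le> j"
        then have "k \<le> l" "l < j" using False by auto
        with Suc.IH have "(P ! k, P ! l) \<in> ?r\<^sup>*" "(P ! l, P ! k) \<in> ?r\<^sup>*" by auto
        with link[of l] that \<open>k \<le> l\<close> \<open>l < j\<close> show "(P ! k, P ! Suc l) \<in> ?r\<^sup>* \<and> (P ! Suc l, P ! k) \<in> ?r\<^sup>*"
          by (meson le_trans rtrancl_into_rtrancl converse_rtrancl_into_rtrancl)
      qed
    qed simp
  qed simp
  show ?thesis unfolding connected_set_def
  proof (intro ballI)
    fix u w assume "u \<in> ?S" "w \<in> ?S"
    then obtain k l where "u = P ! k" "w = P ! l" "k \<in> {i..j}" "l \<in> {i..j}" by blast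
    then show "(u, w) \<in> ?r\<^sup>*" using reach[of k l] reach[of l k] by (cases "k \<le> l") auto
  qed
qed

lemma connected_subset_of_path_contains_segment:
  assumes P: "is_path V E P" and S: "S \<subseteq> set P" "connected_set E S"
    and ends: "P ! i \<in> S" "P ! j \<in> S" and k: "i \<le> k" "k \<le> j" "j < length P"
  shows "P ! k \<in> S"
proof (rule ccontr)
  assume out: "P ! k \<notin> S"
  have "(P ! i, P ! j) \<in> {(x, y). x \<in> S \<and> y \<in> S \<and> E x y}\<^sup>*"
    using S(2) ends unfolding connected_set_def by blast
  then have "\<exists>p < k. P ! j = P ! p"
  proof (induction rule: rtrancl_induct)
    case base
    show ?case using out ends(1) k(1) by (intro exI[of _ i]) (auto simp: le_less)
  next
    case (step y z)
    then obtain p where p: "p < k" "y = P ! p" by blast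
    have "z \<in> set P" using step(2) S(1) by blast
    then obtain q where q: "q < length P" "z = P ! q" by (auto simp: in_set_conv_nth)
    have "p = Suc q \<or> q = Suc p" using is_path_adj[OF P, of p q] step(2) p q k by simp
    moreover have "q \<noteq> k" using out q step(2) by auto
    ultimately show ?case using p q by (intro exI[of _ q]) auto
  qed
  then obtain p where "p < k" "P ! j = P ! p" by blast
  moreover have "distinct P" using P unfolding is_path_def by blast
  ultimately show False using k by (simp add: nth_eq_iff_index_eq)
qed

lemma connected_subset_of_path_contains_interior:
  assumes P: "is_path V E P" and S: "S \<subseteq> set P" "connected_set E S"
    and s: "s1 \<in> S" "E (hd P) s1" "s2 \<in> S" "E (last P) s2"
    and w: "w \<in> set P" "w \<noteq> hd P" "w \<noteq> last P"
  shows "w \<in> S"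
proof -
  have "P \<noteq> []" using w(1) by auto
  obtain k where k: "k < length P" "w = P ! k" using w(1) by (auto simp: in_set_conv_nth)
  have "hd P = P ! 0" "last P = P ! (length P - 1)"
    using \<open>P \<noteq> []\<close> by (simp_all add: hd_conv_nth last_conv_nth)
  then have "k \<noteq> 0" "k \<noteq> length P - 1" using k w(2,3) by metis+
  moreover have "P ! 1 \<in> S" "P ! (length P - 2) \<in> S"
    using s S(1) is_path_hd_nbr[OF P] is_path_last_nbr[OF P] by blast+
  ultimately show ?thesis
    using connected_subset_of_path_contains_segment[OF P S, of 1 "length P - 2" k] k by auto
qed

lemma connected_subset_of_path_contains_far_interior:
  assumes P: "path_from_to V E P c1 c2" and S: "S \<subseteq> set P" "connected_set E S"
    and s: "s1 \<in> S" "E c1 s1" "s2 \<in> S" "E c2 s2"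
    and w: "w \<in> set P - {c1, c2} - {P ! 1, P ! (length P - 2)}"
  shows "w \<in> S \<and> \<not> E c1 w \<and> \<not> E c2 w"
proof -
  have path: "is_path V E P" "hd P = c1" "last P = c2" using P unfolding path_from_to_def by blast+
  have "w \<in> S" using connected_subset_of_path_contains_interior[OF path(1) S] s w path(2,3) by blast
  moreover have "\<not> E c1 w" "\<not> E c2 w"
    using w path is_path_hd_nbr[OF path(1), of w] is_path_last_nbr[OF path(1), of w] by auto
  ultimately show ?thesis by blast
qed

lemma component_of_nbr:
  "component_of E W S \<Longrightarrow> u \<in> S \<Longrightarrow> w \<in> W \<Longrightarrow> E u w \<Longrightarrow> w \<in> S"
  unfolding component_of_def by blast

lemma component_of_connected_subset:
  assumes S: "component_of E W S" and T: "T \<subseteq> W" "connected_set E T" and x: "x \<in> T" "x \<in> S"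
  shows "T \<subseteq> S"
proof
  fix y assume "y \<in> T"
  then have "(x, y) \<in> {(x, y). x \<in> T \<and> y \<in> T \<and> E x y}\<^sup>*"
    using T(2) x(1) unfolding connected_set_def by blast
  then show "y \<in> S"
  proof (induction rule: rtrancl_induct)
    case (step y z)
    then show ?case using component_of_nbr[OF S, of y z] T(1) by blast
  qed (rule x(2))
qed

lemma component_of_disjoint:
  assumes S: "component_of E W S" and T: "component_of E W T" and "S \<noteq> T"
  shows "S \<inter> T = {}"
proof (rule ccontr)
  assume "S \<inter> T \<noteq> {}"
  then obtain x where "x \<in> S" "x \<in> T" by blast
  moreover have "S \<subseteq> W" "connected_set E S" "T \<subseteq> W" "connected_set E T"
    using S T unfolding component_of_def by blast+
  ultimately have "S \<subseteq> T" "T \<subseteq> S"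
    using component_of_connected_subset[OF T, of S x] component_of_connected_subset[OF S, of T x]
    by blast+
  with \<open>S \<noteq> T\<close> show False by blast
qed

lemma nth_notin_nth_segment:
  "distinct xs \<Longrightarrow> i < length xs \<Longrightarrow> hi < length xs \<Longrightarrow> i < lo \<or> hi < i \<Longrightarrow>
    xs ! i \<notin> (!) xs ` {lo..hi}"
  by (auto simp: nth_eq_iff_index_eq)

locale hole_crossing_vertex =
  fixes V :: "'a set" and E :: "'a \<Rightarrow> 'a \<Rightarrow> bool" and C L R :: "'a set"
    and c1 c2 v a b :: 'a and H HL HR :: "'a list"
  assumes graph: "graph V E" and sep: "proper_separator V E C L R"
    and hole: "sep_hole V E C L R c1 c2 H HL HR"
    and a: "a \<in> set HL - {c1, c2} - {HL ! 1, HL ! (length HL - 2)}" "E v a"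
    and b: "b \<in> set HR - {c1, c2} - {HR ! 1, HR ! (length HR - 2)}" "E v b"
begin

lemma E_sym: "E x y \<Longrightarrow> E y x"
  using graph unfolding graph_def by blast

lemma compL: "component_of E (V - C) L" and compR: "component_of E (V - C) R"
  using sep unfolding proper_separator_def by blast+

lemma LR_disjoint: "L \<inter> R = {}"
  using component_of_disjoint[OF compL compR] sep unfolding proper_separator_def by blast

lemma HL_path: "path_from_to V E HL c1 c2" and HR_path: "path_from_to V E HR c1 c2"
  and c1_ne_c2: "c1 \<noteq> c2" and H_sides: "set H = set HL \<union> set HR"
  and HL_side: "set HL - {c1, c2} \<subseteq> L" and HR_side: "set HR - {c1, c2} \<subseteq> R"
  and c1_in_H: "c1 \<in> set H" and c2_in_H: "c2 \<in> set H"
  using hole unfolding sep_hole_def by auto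

lemma H_minus_C: "set H - {c1, c2} \<subseteq> V - C"
proof -
  have "is_hole V E H" "set H \<inter> C = {c1, c2}" using hole unfolding sep_hole_def by simp_all
  then show ?thesis unfolding is_hole_def by auto
qed

lemma H_minus_C_sides: "set H - {c1, c2} \<subseteq> L \<union> R"
  and H_minus_C_L: "(set H - {c1, c2}) \<inter> L \<subseteq> set HL"
  and H_minus_C_R: "(set H - {c1, c2}) \<inter> R \<subseteq> set HR"
  using H_sides HL_side HR_side LR_disjoint by blast+

lemma a_in_L: "a \<in> L" and b_in_R: "b \<in> R"
  using a b HL_side HR_side by blast+

lemma a_nonadj_ends: "\<not> E c1 a" "\<not> E c2 a"
proof -
  have P: "is_path V E HL" "hd HL = c1" "last HL = c2"
    using HL_path unfolding path_from_to_def by blast+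
  show "\<not> E c1 a" "\<not> E c2 a"
    using a P(2,3) is_path_hd_nbr[OF P(1), of a] is_path_last_nbr[OF P(1), of a] by auto
qed

lemma c1_c2_nonadj: "\<not> E c1 c2"
proof
  assume "E c1 c2"
  have path: "is_path V E HL" "hd HL = c1" "last HL = c2"
    using HL_path unfolding path_from_to_def by blast+
  then have "HL \<noteq> []" "distinct HL" unfolding is_path_def by blast+
  have "c2 = HL ! 1" using is_path_hd_nbr[OF path(1)] path \<open>E c1 c2\<close> \<open>HL \<noteq> []\<close> last_in_set by blast
  moreover have "c2 = HL ! (length HL - 1)" using path(3) \<open>HL \<noteq> []\<close> by (simp add: last_conv_nth)
  moreover have "c1 = HL ! 0" using path(2) \<open>HL \<noteq> []\<close> by (simp add: hd_conv_nth)
  moreover have "1 < length HL" using path(2,3) c1_ne_c2 \<open>HL \<noteq> []\<close> by (cases HL) auto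
  ultimately have "length HL - 1 = 1"
    using nth_eq_iff_index_eq[OF \<open>distinct HL\<close>, of "length HL - 1" 1] by simp
  then have "length HL = 2" by simp
  then have "set HL \<subseteq> {c1, c2}"
    using \<open>c1 = HL ! 0\<close> \<open>c2 = HL ! 1\<close> by (auto simp: in_set_conv_nth less_2_cases_iff)
  with a show False by blast
qed

lemma connected_link_has_private_nbr:
  assumes S: "S \<subseteq> set H - {c1, c2}" "connected_set E S"
    and s: "s1 \<in> S" "E c1 s1" "s2 \<in> S" "E c2 s2"
  shows "\<exists>s \<in> S. E v s \<and> \<not> E c1 s \<and> \<not> E c2 s"
proof -
  have SW: "S \<subseteq> V - C" using S(1) H_minus_C by blast
  from H_minus_C_sides S(1) s(1) consider "s1 \<in> L" | "s1 \<in> R" by blast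
  then show ?thesis
  proof cases
    case 1
    then have "S \<subseteq> L" using component_of_connected_subset[OF compL SW S(2) s(1)] by blast
    then have "S \<subseteq> set HL" using S(1) H_minus_C_L by blast
    then show ?thesis using connected_subset_of_path_contains_far_interior[OF HL_path _ S(2) s a(1)] a(2)
      by blast
  next
    case 2
    then have "S \<subseteq> R" using component_of_connected_subset[OF compR SW S(2) s(1)] by blast
    then have "S \<subseteq> set HR" using S(1) H_minus_C_R by blast
    then show ?thesis using connected_subset_of_path_contains_far_interior[OF HR_path _ S(2) s b(1)] b(2)
      by blast
  qed
qed

lemma v_major: "is_major V E H v"
  unfolding is_major_def
proof (intro conjI notI)
  have aH: "a \<in> set H" and bH: "b \<in> set H" using a b H_sides by blast+
  show "nbrs_in E H v = {} \<Longrightarrow> False" using aH a unfolding nbrs_in_def by blast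
  assume "\<exists>p q r. is_path V E [p, q, r] \<and> set [p, q, r] \<subseteq> set H \<and> nbrs_in E H v \<subseteq> {p, q, r}"
  then obtain p q r where pqr: "is_path V E [p, q, r]" "q \<in> set H" "nbrs_in E H v \<subseteq> {p, q, r}"
    by auto
  have e: "E p q" "E q r" "\<not> E p r" "\<not> E r p" "\<not> E q q"
    using is_path_adj[OF pqr(1), of 0 1] is_path_adj[OF pqr(1), of 1 2]
      is_path_adj[OF pqr(1), of 0 2] is_path_adj[OF pqr(1), of 2 0] is_path_adj[OF pqr(1), of 1 1]
    by auto
  have ab: "a \<in> {p, q, r}" "b \<in> {p, q, r}" "a \<noteq> b"
    using pqr(3) aH bH a b a_in_L b_in_R LR_disjoint unfolding nbrs_in_def by blast+
  have no_ab: "\<not> E a b"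
    using component_of_nbr[OF compL a_in_L] b_in_R LR_disjoint bH H_minus_C b by blast
  txt \<open>Being nonadjacent, a and b are the two ends of the path, so q is a common neighbour.\<close>
  then have aqb: "E a q" "E q b"
    using ab e E_sym by auto
  show False
  proof (cases "q \<in> {c1, c2}")
    case True
    then show False using aqb(1) E_sym a_nonadj_ends by blast
  next
    case False
    then have "q \<in> L" using component_of_nbr[OF compL a_in_L] aqb(1) pqr(2) H_minus_C by blast
    then have "b \<in> L" using component_of_nbr[OF compL] aqb(2) b H_sides H_minus_C by blast
    then show False using b_in_R LR_disjoint by blast
  qed
qed

lemma sector_segment_no_link:
  assumes Q: "is_sector V E H v Q" and seg: "lo \<le> hi" "hi < length Q"
    and c: "{c, c'} = {c1, c2}" "E c (Q ! lo)" "E c' (Q ! hi)"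
    and out: "c \<notin> (!) Q ` {lo..hi}" "c' \<notin> (!) Q ` {lo..hi}"
  shows False
proof -
  let ?S = "(!) Q ` {lo..hi}"
  have cc': "(c = c1 \<and> c' = c2) \<or> (c = c2 \<and> c' = c1)" using c(1) by (simp add: doubleton_eq_iff)
  have Qpath: "is_path V E Q" and QH: "set Q \<subseteq> set H"
    and v_interior: "\<forall>q \<in> set Q - {hd Q, last Q}. \<not> E v q"
    using Q unfolding is_sector_def by blast+
  have "?S \<subseteq> set Q" using seg by auto
  then have "?S \<subseteq> set H - {c1, c2}" using QH out cc' by blast
  moreover have "Q ! lo \<in> ?S" "Q ! hi \<in> ?S" using seg by auto
  then have "\<exists>s1 \<in> ?S. E c1 s1" "\<exists>s2 \<in> ?S. E c2 s2" using cc' c(2,3) by auto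
  ultimately obtain s where s: "s \<in> ?S" "E v s" "\<not> E c1 s" "\<not> E c2 s"
    using connected_link_has_private_nbr[OF _ connected_set_path_segment[OF Qpath seg(2)]]
    by blast
  then obtain k where k: "s = Q ! k" "lo \<le> k" "k \<le> hi" by auto
  have "distinct Q" "Q \<noteq> []" using Qpath unfolding is_path_def by blast+
  then have "k = 0 \<or> k = length Q - 1"
    using v_interior s(2) k seg by (auto simp: hd_conv_nth last_conv_nth nth_eq_iff_index_eq)
  then have "k = lo \<or> k = hi" using k seg by auto
  then show False using s(3,4) c(2,3) k(1) cc' by auto
qed

lemma sector_no_link_both_inside:
  assumes Q: "is_sector V E H v Q" and c: "{c, c'} = {c1, c2}" "c = Q ! i" "c' = Q ! j"
    and ij: "i < j" "j < length Q"
  shows False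
proof -
  have Qpath: "is_path V E Q" using Q unfolding is_sector_def by blast
  then have "distinct Q" unfolding is_path_def by blast
  have "\<not> E c c'" using c(1) c1_c2_nonadj E_sym by (auto simp: doubleton_eq_iff)
  then have seg: "Suc i \<le> j - 1" "j - 1 < length Q"
    using is_path_adj[OF Qpath, of i j] c ij by auto
  have adj: "E c (Q ! Suc i)" "E c' (Q ! (j - 1))"
    using is_path_adj[OF Qpath, of i "Suc i"] is_path_adj[OF Qpath, of j "j - 1"] c ij seg
    by simp_all
  have "c \<notin> (!) Q ` {Suc i..j - 1}" "c' \<notin> (!) Q ` {Suc i..j - 1}"
    using nth_notin_nth_segment[OF \<open>distinct Q\<close>] c ij by auto
  then show False by (rule sector_segment_no_link[OF Q seg c(1) adj])
qed

lemma sector_no_link_one_inside: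
  assumes Q: "is_sector V E H v Q" and c: "{c, c'} = {c1, c2}" "c = Q ! i" "i < length Q"
    and c': "c' \<notin> set Q" "E c' (Q ! j)" "j < length Q"
  shows False
proof -
  have Qpath: "is_path V E Q" using Q unfolding is_sector_def by blast
  then have "distinct Q" unfolding is_path_def by blast
  have "\<not> E c' c" using c(1) c1_c2_nonadj E_sym by (auto simp: doubleton_eq_iff)
  then have "i \<noteq> j" using c c' by auto
  then consider "j < i" | "i < j" by linarith
  then show False
  proof cases
    case 1
    have seg: "j \<le> i - 1" "i - 1 < length Q" using 1 c(3) by auto
    have "{c', c} = {c1, c2}" using c(1) by auto
    moreover have "E c (Q ! (i - 1))"
      using is_path_adj[OF Qpath, of i "i - 1"] c 1 by simp
    moreover have "c' \<notin> (!) Q ` {j..i - 1}" "c \<notin> (!) Q ` {j..i - 1}"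
      using c' nth_notin_nth_segment[OF \<open>distinct Q\<close>, of i "i - 1" j] c 1 by auto
    ultimately show False using sector_segment_no_link[OF Q seg] c'(2) by blast
  next
    case 2
    have "E c (Q ! Suc i)" using is_path_adj[OF Qpath, of i "Suc i"] c 2 c'(3) by simp
    moreover have "c \<notin> (!) Q ` {Suc i..j}" "c' \<notin> (!) Q ` {Suc i..j}"
      using c' nth_notin_nth_segment[OF \<open>distinct Q\<close>, of i j "Suc i"] c 2 by auto
    moreover have seg: "Suc i \<le> j" "j < length Q" using 2 c'(3) by auto
    ultimately show False using sector_segment_no_link[OF Q seg c(1)] c'(2) by blast
  qed
qed

lemma sector_no_link_both_outside:
  assumes Q: "is_sector V E H v Q" and c: "{c, c'} = {c1, c2}" "c \<notin> set Q" "c' \<notin> set Q"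
    and adj: "E c (Q ! i)" "E c' (Q ! j)" and ij: "i \<le> j" "j < length Q"
  shows False
proof -
  have "c \<notin> (!) Q ` {i..j}" "c' \<notin> (!) Q ` {i..j}" using c(2,3) ij by auto
  then show False using sector_segment_no_link[OF Q ij c(1) adj] by blast
qed

lemma ext_nbhd_cases:
  assumes Q: "is_sector V E H v Q" and x: "x \<in> ext_nbhd E H v Q"
  obtains i where "i < length Q" "x = Q ! i"
    | j where "x \<notin> set Q" "j < length Q" "E x (Q ! j)"
proof -
  have "Q \<noteq> []" using Q unfolding is_sector_def is_path_def by blast
  then have "hd Q = Q ! 0" "last Q = Q ! (length Q - 1)"
    by (simp_all add: hd_conv_nth last_conv_nth)
  with x consider "x \<in> set Q" | "x \<notin> set Q" "E x (Q ! 0)" | "x \<notin> set Q" "E x (Q ! (length Q - 1))"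
    unfolding ext_nbhd_def by auto
  then show ?thesis
  proof cases
    case 1
    then show ?thesis using that(1) by (auto simp: in_set_conv_nth)
  next
    case 2
    then show ?thesis using that(2)[of 0] \<open>Q \<noteq> []\<close> by simp
  next
    case 3
    then show ?thesis using that(2)[of "length Q - 1"] \<open>Q \<noteq> []\<close> by simp
  qed
qed

lemma c1_c2_distant: "distant V E H v c1 c2"
  unfolding distant_def
proof (intro conjI notI)
  show "c1 \<in> set H" "c2 \<in> set H" by (fact c1_in_H, fact c2_in_H)
  assume "\<exists>Q. is_sector V E H v Q \<and> c1 \<in> ext_nbhd E H v Q \<and> c2 \<in> ext_nbhd E H v Q"
  then obtain Q where Q: "is_sector V E H v Q"
    and e1: "c1 \<in> ext_nbhd E H v Q" and e2: "c2 \<in> ext_nbhd E H v Q" by blast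
  have c12: "{c1, c2} = {c1, c2}" "{c2, c1} = {c1, c2}" by auto
  show False
  proof (cases rule: ext_nbhd_cases[OF Q e1]; cases rule: ext_nbhd_cases[OF Q e2])
    fix i j assume "i < length Q" "c1 = Q ! i" "j < length Q" "c2 = Q ! j"
    moreover have "i \<noteq> j" using calculation c1_ne_c2 by auto
    ultimately show False
      using sector_no_link_both_inside[OF Q c12(1)] sector_no_link_both_inside[OF Q c12(2)]
      by (metis linorder_neqE_nat)
  next
    fix i j assume "i < length Q" "c1 = Q ! i" "c2 \<notin> set Q" "j < length Q" "E c2 (Q ! j)"
    then show False using sector_no_link_one_inside[OF Q c12(1)] by blast
  next
    fix i j assume "c1 \<notin> set Q" "i < length Q" "E c1 (Q ! i)" "j < length Q" "c2 = Q ! j"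
    then show False using sector_no_link_one_inside[OF Q c12(2)] by blast
  next
    fix i j assume "c1 \<notin> set Q" "i < length Q" "E c1 (Q ! i)" "c2 \<notin> set Q" "j < length Q" "E c2 (Q ! j)"
    then show False
      using sector_no_link_both_outside[OF Q c12(1)] sector_no_link_both_outside[OF Q c12(2)]
      by (metis linorder_le_cases)
  qed
qed

end

theorem lemma3p3:
  fixes V :: "'a set" and E :: "'a \<Rightarrow> 'a \<Rightarrow> bool"
    and C L R :: "'a set" and c1 c2 v :: 'a and H HL HR :: "'a list"
  assumes "in_class_C V E"
    and "proper_separator V E C L R"
    and "c1 \<in> C" and "c2 \<in> C"
    and "sep_hole V E C L R c1 c2 H HL HR"
    and "v \<in> V" and "v \<notin> set H"
    and "\<exists>u \<in> set HL - {c1, c2} - {HL ! 1, HL ! (length HL - 2)}. E v u"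
    and "\<exists>u \<in> set HR - {c1, c2} - {HR ! 1, HR ! (length HR - 2)}. E v u"
  shows "heavy V E H c1 c2 v"
proof -
  obtain a where "a \<in> set HL - {c1, c2} - {HL ! 1, HL ! (length HL - 2)}" "E v a"
    using assms(8) by blast
  moreover obtain b where "b \<in> set HR - {c1, c2} - {HR ! 1, HR ! (length HR - 2)}" "E v b"
    using assms(9) by blast
  moreover have "graph V E" using assms(1) unfolding in_class_C_def by blast
  ultimately interpret hole_crossing_vertex V E C L R c1 c2 v a b H HL HR
    using assms(2,5) by unfold_locales
  show ?thesis unfolding heavy_def using v_major c1_c2_distant by blast
qed

end
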